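(* Assume (A1) and (A6) together with: (a) $M(1)\ge M(0)$ and $Y(1,1)\ge Y(0,m)$ for $m=0,1$; (b) for each $m\in\{0,1\}$, $A\perp\{Y(1,1),Y(0,m),M(1),M(0)\}\mid X$; (c) for each $m\in\{0,1\}$, $\{M(0),M(1)\}\perp Y(0,m)\mid X$; (d) there is $\epsilon>0$ with $P\{P(A=0,M=m\mid X)\ge\epsilon\}=1$ for $m=0,1$ and $P\{P(A=1,M=1\mid X)\ge\epsilon\}=1$. Then for (almost) every $x$, $$\delta(x) = \Big[1-\frac{\mu_{00}(x)}{\mu_{11}(x)}\Big]\Big[1-\frac{\gamma_0(x)}{\gamma_1(x)}\Big] + \Big[1-\frac{\mu_{01}(x)}{\mu_{11}(x)}\Big]\frac{\gamma_0(x)}{\gamma_1(x)}.$$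
   Context: Observed data $O=(X,A,M,Y)$ with covariates $X\in\mathbb{R}^d$, binary exposure $A$, binary mediator $M$, binary outcome $Y$. For $a,m\in\{0,1\}$, $Y(a,m)$ is the potential outcome under $A=a,M=m$, $M(a)$ the potential mediator, $Y(a):=Y(a,M(a))$, all on a common probability space with $O$. $\mu_{am}(x)=P(Y=1\mid A=a,M=m,X=x)$, $\gamma_a(x)=P(M=1\mid A=a,X=x)$. $\delta(x)=P(Y(0)=0\mid Y(1)=1,M(1)=1,X=x)$. (A1) consistency: $A=a,M=m\Rightarrow Y=Y(a,m)$ and $A=a\Rightarrow M=M(a)$. (A6) $P\{P(Y=1\mid A=1,M=1,X)\ge\epsilon\}=1$ for some $\epsilon>0$. *)

theory Defs
  imports "HOL-Probability.Probability"
begin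

definition sigX :: "'a measure \<Rightarrow> ('a \<Rightarrow> real^'d) \<Rightarrow> 'a measure" where
  "sigX M X = vimage_algebra (space M) X borel"

definition cprob :: "'a measure \<Rightarrow> 'a measure \<Rightarrow> ('a \<Rightarrow> bool) \<Rightarrow> 'a \<Rightarrow> real" where
  "cprob M F E = real_cond_exp M F (indicator {w \<in> space M. E w})"

definition ccprob :: "'a measure \<Rightarrow> 'a measure \<Rightarrow> ('a \<Rightarrow> bool) \<Rightarrow> ('a \<Rightarrow> bool) \<Rightarrow> 'a \<Rightarrow> real" where
  "ccprob M F E C = (\<lambda>w. cprob M F (\<lambda>v. E v \<and> C v) w / cprob M F C w)"

definition cond_indep :: "'a measure \<Rightarrow> 'a measure \<Rightarrow> ('a \<Rightarrow> 'u) \<Rightarrow> ('a \<Rightarrow> 'v) \<Rightarrow> bool" where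
  "cond_indep M F U V \<longleftrightarrow> (\<forall>S T. AE w in M.
      cprob M F (\<lambda>v. U v \<in> S \<and> V v \<in> T) w = cprob M F (\<lambda>v. U v \<in> S) w * cprob M F (\<lambda>v. V v \<in> T) w)"

end

theory Submission
  imports Defs
begin

text \<open>Under monotonicity the event \<open>Y(1,M(1)) \<and> M(1)\<close> is the disjoint union of the principal
  stratum \<open>\<not> Y(0,M(0))\<close> (inside it), of \<open>M(0) \<and> Y(0,1)\<close> and of \<open>\<not> M(0) \<and> M(1) \<and> Y(0,0)\<close>.
  Conditionally on X, ignorability factorizes the last two probabilities and identifies the
  observed ratios: \<open>\<mu>\<^sub>0\<^sub>m = P(Y(0,m))\<close>, \<open>\<gamma>\<^sub>a = P(M(a))\<close> and
  \<open>\<mu>\<^sub>1\<^sub>1 = P(Y(1,M(1)), M(1)) / P(M(1))\<close>. Dividing the decomposition by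
  \<open>P(Y(1,M(1)), M(1))\<close> then yields the formula for \<open>\<delta>\<close> by field arithmetic.\<close>

lemma sigma_finite_subalgebra_sigX:
  assumes "prob_space M" and "X \<in> borel_measurable M"
  shows "sigma_finite_subalgebra M (sigX M X)"
proof (rule finite_measure_subalgebra_is_sigma_finite)
  interpret prob_space M by fact
  show "finite_measure_subalgebra M (sigX M X)"
  proof unfold_locales
    have "sets (sigX M X) = {X -` B \<inter> space M |B. B \<in> sets borel}"
      unfolding sigX_def by (rule sets_vimage_algebra2) simp
    then show "subalgebra M (sigX M X)"
      unfolding subalgebra_def sigX_def using measurable_sets[OF assms(2)] by auto
  qed
qed

lemma cprob_cong: "(\<And>w. w \<in> space M \<Longrightarrow> E w = E' w) \<Longrightarrow> cprob M F E = cprob M F E'"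
  unfolding cprob_def by (metis (no_types, lifting) Collect_cong)

lemma cprob_disjoint_add:
  assumes "sigma_finite_subalgebra M F" and "finite_measure M"
    and "{w\<in>space M. E1 w} \<in> sets M" and "{w\<in>space M. E2 w} \<in> sets M"
    and "\<And>w. w \<in> space M \<Longrightarrow> \<not> (E1 w \<and> E2 w)"
  shows "AE w in M. cprob M F (\<lambda>v. E1 v \<or> E2 v) w = cprob M F E1 w + cprob M F E2 w"
proof -
  have "indicator {w\<in>space M. E1 w \<or> E2 w}
      = (\<lambda>w. indicator {w\<in>space M. E1 w} w + indicator {w\<in>space M. E2 w} w :: real)"
    using assms(5) by (auto simp: indicator_def fun_eq_iff)
  moreover have "integrable M (indicator B :: _ \<Rightarrow> real)" if "B \<in> sets M" for B
    using that finite_measure.emeasure_finite[OF assms(2)]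
    by (auto intro!: integrable_real_indicator simp: less_top)
  ultimately show ?thesis
    unfolding cprob_def using assms(3,4)
    by (metis sigma_finite_subalgebra.real_cond_exp_add[OF assms(1)])
qed

lemma cond_indep_cprob:
  assumes "cond_indep M F U V"
    and "\<And>w. w \<in> space M \<Longrightarrow> E w \<longleftrightarrow> U w \<in> S \<and> V w \<in> T"
    and "\<And>w. w \<in> space M \<Longrightarrow> E1 w \<longleftrightarrow> U w \<in> S"
    and "\<And>w. w \<in> space M \<Longrightarrow> E2 w \<longleftrightarrow> V w \<in> T"
  shows "AE w in M. cprob M F E w = cprob M F E1 w * cprob M F E2 w"
proof -
  have "cprob M F E = cprob M F (\<lambda>v. U v \<in> S \<and> V v \<in> T)"
    "cprob M F E1 = cprob M F (\<lambda>v. U v \<in> S)" "cprob M F E2 = cprob M F (\<lambda>v. V v \<in> T)"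
    using assms(2-4) by (auto intro: cprob_cong)
  with assms(1) show ?thesis
    unfolding cond_indep_def by simp
qed

lemma principal_stratum_ratio:
  fixes n s g0 g1 y00 y01 :: real
  assumes "s = n + g0 * y01 + (g1 - g0) * y00" and "s / g1 \<noteq> 0"
  shows "n / s = (1 - y00 / (s / g1)) * (1 - g0 / g1) + (1 - y01 / (s / g1)) * (g0 / g1)"
proof -
  have "s \<noteq> 0" "g1 \<noteq> 0" using assms(2) by auto
  then have "(1 - y00 / (s / g1)) * (1 - g0 / g1) + (1 - y01 / (s / g1)) * (g0 / g1)
      = (s - (g1 - g0) * y00 - g0 * y01) / s"
    by (simp add: field_simps)
  also have "\<dots> = n / s" using assms(1) by (simp add: algebra_simps)
  finally show ?thesis ..
qed

locale mediation_model = prob_space M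
  for M :: "'a measure" and X :: "'a \<Rightarrow> real^'d" and A Med Y :: "'a \<Rightarrow> bool"
    and Yp :: "bool \<Rightarrow> bool \<Rightarrow> 'a \<Rightarrow> bool" and Mp :: "bool \<Rightarrow> 'a \<Rightarrow> bool" +
  assumes X_measurable: "X \<in> borel_measurable M"
    and Yp_measurable: "\<And>a m. Yp a m \<in> measurable M (count_space UNIV)"
    and Mp_measurable: "\<And>a. Mp a \<in> measurable M (count_space UNIV)"
    and consistency: "\<forall>w\<in>space M. Med w = Mp (A w) w \<and> Y w = Yp (A w) (Med w) w"
    and monotone: "\<forall>w\<in>space M. Mp False w \<le> Mp True w \<and> (\<forall>m. Yp False m w \<le> Yp True True w)"
    and exposure_ignorable: "\<And>m. cond_indep M (sigX M X) A
                 (\<lambda>w. (Yp True True w, Yp False m w, Mp True w, Mp False w))"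
    and mediator_ignorable: "\<And>m. cond_indep M (sigX M X) (\<lambda>w. (Mp False w, Mp True w)) (Yp False m)"
begin

declare Yp_measurable [measurable] Mp_measurable [measurable]

abbreviation PX :: "('a \<Rightarrow> bool) \<Rightarrow> 'a \<Rightarrow> real" where
  "PX \<equiv> cprob M (sigX M X)"

abbreviation ratio_PX :: "('a \<Rightarrow> bool) \<Rightarrow> ('a \<Rightarrow> bool) \<Rightarrow> 'a \<Rightarrow> real" where
  "ratio_PX \<equiv> ccprob M (sigX M X)"

lemma consistency_Med: "w \<in> space M \<Longrightarrow> Med w \<longleftrightarrow> A w \<and> Mp True w \<or> \<not> A w \<and> Mp False w"
  using consistency by (metis (full_types))

lemma consistency_Y: "w \<in> space M \<Longrightarrow> Y w \<longleftrightarrow>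
    A w \<and> (Med w \<and> Yp True True w \<or> \<not> Med w \<and> Yp True False w)
    \<or> \<not> A w \<and> (Med w \<and> Yp False True w \<or> \<not> Med w \<and> Yp False False w)"
  using consistency by (metis (full_types))

lemmas consistency_simps = consistency_Med consistency_Y

lemma PX_disjoint_add:
  assumes "{w\<in>space M. E1 w} \<in> sets M" and "{w\<in>space M. E2 w} \<in> sets M"
    and "\<And>w. w \<in> space M \<Longrightarrow> \<not> (E1 w \<and> E2 w)"
  shows "AE w in M. PX (\<lambda>v. E1 v \<or> E2 v) w = PX E1 w + PX E2 w"
  using cprob_disjoint_add[OF sigma_finite_subalgebra_sigX[OF prob_space_axioms X_measurable]
      finite_measure_axioms assms] .

text \<open>The positivity premises are needed because \<open>ccprob\<close> is a quotient and \<open>x / 0 = 0\<close>.\<close>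

lemma mu00_identified:
  "AE w in M. PX (\<lambda>v. \<not> A v \<and> \<not> Med v) w \<noteq> 0 \<longrightarrow>
     ratio_PX Y (\<lambda>v. \<not> A v \<and> \<not> Med v) w = PX (Yp False False) w"
proof -
  have "AE w in M. PX (\<lambda>v. Y v \<and> (\<not> A v \<and> \<not> Med v)) w
      = PX (\<lambda>v. \<not> A v) w * PX (\<lambda>v. \<not> Mp False v \<and> Yp False False v) w"
    by (rule cond_indep_cprob[OF exposure_ignorable[of False],
          where S = "{False}" and T = "{(_, y, _, m). \<not> m \<and> y}"])
      (auto simp: consistency_simps)
  moreover have "AE w in M. PX (\<lambda>v. \<not> Mp False v \<and> Yp False False v) w
      = PX (\<lambda>v. \<not> Mp False v) w * PX (Yp False False) w"
    by (rule cond_indep_cprob[OF mediator_ignorable[of False],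
          where S = "{(m, _). \<not> m}" and T = "{True}"]) auto
  moreover have "AE w in M. PX (\<lambda>v. \<not> A v \<and> \<not> Med v) w = PX (\<lambda>v. \<not> A v) w * PX (\<lambda>v. \<not> Mp False v) w"
    by (rule cond_indep_cprob[OF exposure_ignorable[of False],
          where S = "{False}" and T = "{(_, _, _, m). \<not> m}"])
      (auto simp: consistency_simps)
  ultimately show ?thesis
    by eventually_elim (auto simp: ccprob_def)
qed

lemma mu01_identified:
  "AE w in M. PX (\<lambda>v. \<not> A v \<and> Med v) w \<noteq> 0 \<longrightarrow>
     ratio_PX Y (\<lambda>v. \<not> A v \<and> Med v) w = PX (Yp False True) w"
proof -
  have "AE w in M. PX (\<lambda>v. Y v \<and> (\<not> A v \<and> Med v)) w
      = PX (\<lambda>v. \<not> A v) w * PX (\<lambda>v. Mp False v \<and> Yp False True v) w"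
    by (rule cond_indep_cprob[OF exposure_ignorable[of True],
          where S = "{False}" and T = "{(_, y, _, m). m \<and> y}"])
      (auto simp: consistency_simps)
  moreover have "AE w in M. PX (\<lambda>v. Mp False v \<and> Yp False True v) w
      = PX (Mp False) w * PX (Yp False True) w"
    by (rule cond_indep_cprob[OF mediator_ignorable[of True],
          where S = "{(m, _). m}" and T = "{True}"]) auto
  moreover have "AE w in M. PX (\<lambda>v. \<not> A v \<and> Med v) w = PX (\<lambda>v. \<not> A v) w * PX (Mp False) w"
    by (rule cond_indep_cprob[OF exposure_ignorable[of True],
          where S = "{False}" and T = "{(_, _, _, m). m}"])
      (auto simp: consistency_simps)
  ultimately show ?thesis
    by eventually_elim (auto simp: ccprob_def)
qed

lemma mu11_identified:
  "AE w in M. PX (\<lambda>v. A v \<and> Med v) w \<noteq> 0 \<longrightarrow>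
     ratio_PX Y (\<lambda>v. A v \<and> Med v) w = PX (\<lambda>v. Yp True (Mp True v) v \<and> Mp True v) w / PX (Mp True) w"
proof -
  have "AE w in M. PX (\<lambda>v. Y v \<and> (A v \<and> Med v)) w
      = PX A w * PX (\<lambda>v. Yp True (Mp True v) v \<and> Mp True v) w"
    by (rule cond_indep_cprob[OF exposure_ignorable[of True],
          where S = "{True}" and T = "{(y, _, m, _). y \<and> m}"])
      (auto simp: consistency_simps)
  moreover have "AE w in M. PX (\<lambda>v. A v \<and> Med v) w = PX A w * PX (Mp True) w"
    by (rule cond_indep_cprob[OF exposure_ignorable[of True],
          where S = "{True}" and T = "{(_, _, m, _). m}"])
      (auto simp: consistency_simps)
  ultimately show ?thesis
    by eventually_elim (auto simp: ccprob_def)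
qed

lemma gamma0_identified:
  "AE w in M. PX (\<lambda>v. \<not> A v \<and> Med v) w \<noteq> 0 \<longrightarrow>
     ratio_PX Med (\<lambda>v. \<not> A v) w = PX (Mp False) w"
proof -
  have "AE w in M. PX (\<lambda>v. Med v \<and> \<not> A v) w = PX (\<lambda>v. \<not> A v) w * PX (Mp False) w"
    by (rule cond_indep_cprob[OF exposure_ignorable[of True],
          where S = "{False}" and T = "{(_, _, _, m). m}"])
      (auto simp: consistency_simps)
  moreover have "PX (\<lambda>v. \<not> A v \<and> Med v) = PX (\<lambda>v. Med v \<and> \<not> A v)"
    by (rule cprob_cong) auto
  ultimately show ?thesis
    by (auto simp: ccprob_def elim!: eventually_mono)
qed

lemma gamma1_identified:
  "AE w in M. PX (\<lambda>v. A v \<and> Med v) w \<noteq> 0 \<longrightarrow> ratio_PX Med A w = PX (Mp True) w"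
proof -
  have "AE w in M. PX (\<lambda>v. Med v \<and> A v) w = PX A w * PX (Mp True) w"
    by (rule cond_indep_cprob[OF exposure_ignorable[of True],
          where S = "{True}" and T = "{(_, _, m, _). m}"])
      (auto simp: consistency_simps)
  moreover have "PX (\<lambda>v. A v \<and> Med v) = PX (\<lambda>v. Med v \<and> A v)"
    by (rule cprob_cong) auto
  ultimately show ?thesis
    by (auto simp: ccprob_def elim!: eventually_mono)
qed

lemma PX_Mp_True_split:
  "AE w in M. PX (Mp True) w = PX (Mp False) w + PX (\<lambda>v. \<not> Mp False v \<and> Mp True v) w"
proof -
  have "PX (Mp True) = PX (\<lambda>v. Mp False v \<or> \<not> Mp False v \<and> Mp True v)"
    by (rule cprob_cong) (use monotone in auto)
  moreover have "AE w in M. PX (\<lambda>v. Mp False v \<or> \<not> Mp False v \<and> Mp True v) w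
      = PX (Mp False) w + PX (\<lambda>v. \<not> Mp False v \<and> Mp True v) w"
    by (rule PX_disjoint_add) auto
  ultimately show ?thesis by simp
qed

lemma PX_Y1M1_strata:
  "AE w in M. PX (\<lambda>v. Yp True (Mp True v) v \<and> Mp True v) w
     = PX (\<lambda>v. \<not> Yp False (Mp False v) v \<and> (Yp True (Mp True v) v \<and> Mp True v)) w
       + PX (\<lambda>v. Mp False v \<and> Yp False True v) w
       + PX (\<lambda>v. (\<not> Mp False v \<and> Mp True v) \<and> Yp False False v) w"
proof -
  define N where "N v \<longleftrightarrow> \<not> Yp False (Mp False v) v \<and> (Yp True (Mp True v) v \<and> Mp True v)" for v
  define W where "W v \<longleftrightarrow> Mp False v \<and> Yp False True v \<or> (\<not> Mp False v \<and> Mp True v) \<and> Yp False False v"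
    for v
  have strata: "PX (\<lambda>v. Yp True (Mp True v) v \<and> Mp True v) = PX (\<lambda>v. N v \<or> W v)"
  proof (rule cprob_cong)
    fix w assume "w \<in> space M"
    then show "(Yp True (Mp True w) w \<and> Mp True w) \<longleftrightarrow> N w \<or> W w"
      using monotone unfolding N_def W_def by (cases "Mp False w"; cases "Mp True w") auto
  qed
  have "AE w in M. PX (\<lambda>v. N v \<or> W v) w = PX N w + PX W w"
    unfolding N_def W_def by (rule PX_disjoint_add) auto
  moreover have "AE w in M. PX W w = PX (\<lambda>v. Mp False v \<and> Yp False True v) w
      + PX (\<lambda>v. (\<not> Mp False v \<and> Mp True v) \<and> Yp False False v) w"
    unfolding W_def by (rule PX_disjoint_add) auto
  ultimately show ?thesis
    unfolding strata N_def by eventually_elim simp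
qed

lemma PX_Y1M1_decomposition:
  "AE w in M. PX (\<lambda>v. Yp True (Mp True v) v \<and> Mp True v) w
     = PX (\<lambda>v. \<not> Yp False (Mp False v) v \<and> (Yp True (Mp True v) v \<and> Mp True v)) w
       + PX (Mp False) w * PX (Yp False True) w
       + (PX (Mp True) w - PX (Mp False) w) * PX (Yp False False) w"
proof -
  have "AE w in M. PX (\<lambda>v. Mp False v \<and> Yp False True v) w = PX (Mp False) w * PX (Yp False True) w"
    by (rule cond_indep_cprob[OF mediator_ignorable[of True],
          where S = "{(m, _). m}" and T = "{True}"]) auto
  moreover have "AE w in M. PX (\<lambda>v. (\<not> Mp False v \<and> Mp True v) \<and> Yp False False v) w
      = PX (\<lambda>v. \<not> Mp False v \<and> Mp True v) w * PX (Yp False False) w"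
    by (rule cond_indep_cprob[OF mediator_ignorable[of False],
          where S = "{(m0, m1). \<not> m0 \<and> m1}" and T = "{True}"]) auto
  ultimately show ?thesis
    using PX_Y1M1_strata PX_Mp_True_split by eventually_elim simp
qed

end

theorem mainTheorem3:
  fixes M :: "'a measure"
    and X :: "'a \<Rightarrow> real^'d"
    and A Med Y :: "'a \<Rightarrow> bool"
    and Yp :: "bool \<Rightarrow> bool \<Rightarrow> 'a \<Rightarrow> bool"
    and Mp :: "bool \<Rightarrow> 'a \<Rightarrow> bool"
    and \<epsilon> :: real
  assumes "prob_space M"
    and "X \<in> borel_measurable M"
    and "A \<in> measurable M (count_space UNIV)"
    and "Med \<in> measurable M (count_space UNIV)"
    and "Y \<in> measurable M (count_space UNIV)"
    and "\<And>a m. Yp a m \<in> measurable M (count_space UNIV)"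
    and "\<And>a. Mp a \<in> measurable M (count_space UNIV)"
    \<comment> \<open>(A1) consistency\<close>
    and A1: "\<forall>w\<in>space M. Med w = Mp (A w) w \<and> Y w = Yp (A w) (Med w) w"
    and eps: "\<epsilon> > 0"
    \<comment> \<open>(A6)\<close>
    and A6: "AE w in M. ccprob M (sigX M X) Y (\<lambda>v. A v \<and> Med v) w \<ge> \<epsilon>"
    \<comment> \<open>(a) monotonicity\<close>
    and mono: "\<forall>w\<in>space M. Mp False w \<le> Mp True w \<and> (\<forall>m. Yp False m w \<le> Yp True True w)"
    \<comment> \<open>(b)\<close>
    and ci_b: "\<And>m. cond_indep M (sigX M X) A
                 (\<lambda>w. (Yp True True w, Yp False m w, Mp True w, Mp False w))"
    \<comment> \<open>(c)\<close>
    and ci_c: "\<And>m. cond_indep M (sigX M X) (\<lambda>w. (Mp False w, Mp True w)) (Yp False m)"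
    \<comment> \<open>(d) positivity\<close>
    and pos0: "\<And>m. AE w in M. cprob M (sigX M X) (\<lambda>v. \<not> A v \<and> Med v = m) w \<ge> \<epsilon>"
    and pos1: "AE w in M. cprob M (sigX M X) (\<lambda>v. A v \<and> Med v) w \<ge> \<epsilon>"
  shows "AE w in M.
    ccprob M (sigX M X) (\<lambda>v. \<not> Yp False (Mp False v) v)
                        (\<lambda>v. Yp True (Mp True v) v \<and> Mp True v) w
    = (1 - ccprob M (sigX M X) Y (\<lambda>v. \<not> A v \<and> \<not> Med v) w
           / ccprob M (sigX M X) Y (\<lambda>v. A v \<and> Med v) w)
      * (1 - ccprob M (sigX M X) Med (\<lambda>v. \<not> A v) w / ccprob M (sigX M X) Med A w)
    + (1 - ccprob M (sigX M X) Y (\<lambda>v. \<not> A v \<and> Med v) w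
           / ccprob M (sigX M X) Y (\<lambda>v. A v \<and> Med v) w)
      * (ccprob M (sigX M X) Med (\<lambda>v. \<not> A v) w / ccprob M (sigX M X) Med A w)"
proof -
  interpret mediation_model M X A Med Y Yp Mp
    by (rule mediation_model.intro, fact, unfold_locales) (use assms in auto)
  have "AE w in M. PX (\<lambda>v. A v \<and> Med v) w \<noteq> 0"
    by (rule eventually_mono[OF pos1]) (use eps in auto)
  moreover have "AE w in M. PX (\<lambda>v. \<not> A v \<and> Med v) w \<noteq> 0"
    by (rule eventually_mono[OF pos0[of True]]) (use eps in auto)
  moreover have "AE w in M. PX (\<lambda>v. \<not> A v \<and> \<not> Med v) w \<noteq> 0"
    by (rule eventually_mono[OF pos0[of False]]) (use eps in auto)
  ultimately show ?thesis
    using mu00_identified mu01_identified mu11_identified gamma0_identified gamma1_identified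
      PX_Y1M1_decomposition A6
  proof eventually_elim
    case (elim w)
    then have "PX (\<lambda>v. Yp True (Mp True v) v \<and> Mp True v) w / PX (Mp True) w \<noteq> 0"
      using eps by auto
    from principal_stratum_ratio[OF elim(9) this] elim(1-8) show ?case
      by (simp add: ccprob_def[of _ _ "\<lambda>v. \<not> Yp False (Mp False v) v"])
  qed
qed

end
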